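(* Let $n\ge 2$, $F$ the free group on $g_1,\dots,g_n$, $F^{(1)}=[F,F]$, $F^{(2)}=[F^{(1)},F^{(1)}]$, and let $w\in F^{(1)}\setminus F^{(2)}$. Let $K$ be a field of characteristic $0$. Then for every unipotent matrix $X\in\mathrm{SL}(2,K)$ there exists a group homomorphism $\psi:F\to\mathrm{SL}(2,K)$ with $\psi(w)=X$; equivalently, there exist $Z_1,\dots,Z_n\in\mathrm{SL}(2,K)$ with $w(Z_1,\dots,Z_n)=X$.
   Context: A matrix $X\in\mathrm{SL}(2,K)$ is unipotent if $X-I$ is nilpotent (the identity included). $w(Z_1,\dots,Z_n)$ is the value of the word map of $w$, obtained by substituting $Z_i$ for $g_i$. *)

theory Defs
  imports "HOL-Analysis.Analysis" "HOL-Algebra.Generated_Groups"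
begin

text \<open>Letters of the free group on generators g_0,...,g_(n-1): (i, False) is g_i,
  (i, True) is g_i inverse.  Elements of the free group are freely reduced words.\<close>

type_synonym letter = "nat \<times> bool"

definition cancels :: "letter \<Rightarrow> letter \<Rightarrow> bool" where
  "cancels x y \<longleftrightarrow> fst x = fst y \<and> snd x \<noteq> snd y"

fun freely_reduced :: "letter list \<Rightarrow> bool" where
  "freely_reduced [] = True"
| "freely_reduced [x] = True"
| "freely_reduced (x # y # ys) = (\<not> cancels x y \<and> freely_reduced (y # ys))"

fun reduce :: "letter list \<Rightarrow> letter list" where
  "reduce [] = []"
| "reduce (x # xs) = (case reduce xs of [] \<Rightarrow> [x]
     | y # ys \<Rightarrow> (if cancels x y then ys else x # y # ys))"

definition free_grp :: "nat \<Rightarrow> letter list monoid" where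
  "free_grp n = \<lparr> carrier = {w. freely_reduced w \<and> (\<forall>x\<in>set w. fst x < n)},
                  mult = (\<lambda>u v. reduce (u @ v)),
                  one = [] \<rparr>"

definition SL2 :: "('a::field ^ 2 ^ 2) set" where
  "SL2 = {A. det A = 1}"

definition unipotent :: "'a::field ^ 2 ^ 2 \<Rightarrow> bool" where
  "unipotent X \<longleftrightarrow> (\<exists>k. ((\<lambda>M. (X - mat 1) ** M) ^^ k) (mat 1) = 0)"

definition word_map :: "letter list \<Rightarrow> (nat \<Rightarrow> 'a::field ^ 2 ^ 2) \<Rightarrow> 'a ^ 2 ^ 2" where
  "word_map w Z = foldr (\<lambda>x M. (if snd x then matrix_inv (Z (fst x)) else Z (fst x)) ** M) w (mat 1)"

end

theory Submission
  imports Defs "HOL-Library.Function_Algebras" "HOL-Library.Sublist" "HOL-Computational_Algebra.Polynomial"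
begin

text \<open>
  Send \<open>g\<^sub>i\<close> to the upper triangular matrix \<open>[[T^D\<^sub>i, \<beta>\<^sub>i], [0, T^-D\<^sub>i]]\<close>. A word \<open>w\<close> with
  exponent sum zero goes to \<open>[[1, c], [0, 1]]\<close>, where \<open>c\<close> is a Laurent polynomial in \<open>T\<close> with one
  monomial \<open>\<plusminus>\<beta>\<^sub>i T^(-D\<^sub>i - 2\<langle>D, q\<rangle>)\<close> per letter \<open>g\<^sub>i\<^sup>\<plusminus>\<^sup>1\<close>, \<open>q\<close> being the exponent vector of
  the rest of the word. The same bookkeeping rewrites \<open>w\<close> as a product of Schreier generators of
  \<open>F'\<close> indexed by the pairs \<open>(q, i)\<close>; if each generator occurred as often with exponent \<open>1\<close>
  as with exponent \<open>-1\<close>, then \<open>w\<close> would lie in \<open>F''\<close>. So some pair survives, and choosing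
  \<open>\<beta>\<close> and \<open>D\<close> to isolate it makes \<open>c\<close> a nonzero Laurent polynomial, which has a nonzero
  value in the infinite field \<open>K\<close>. Finally, every unipotent \<open>X \<noteq> 1\<close> in \<open>SL(2, K)\<close> is
  conjugate to \<open>[[1, c], [0, 1]]\<close> for any \<open>c \<noteq> 0\<close>.
\<close>

section \<open>Free reduction and the free group\<close>

definition red_cons :: "letter \<Rightarrow> letter list \<Rightarrow> letter list" where
  "red_cons x ys = (case ys of [] \<Rightarrow> [x] | y # ys' \<Rightarrow> (if cancels x y then ys' else x # ys))"

lemma reduce_Cons_red_cons: "reduce (x # xs) = red_cons x (reduce xs)"
  by (simp add: red_cons_def split: list.split)

declare reduce.simps(2) [simp del]

lemma reduce_append: "reduce (u @ v) = foldr red_cons u (reduce v)"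
  by (induction u) (simp_all add: reduce_Cons_red_cons)

lemma freely_reduced_red_cons: "freely_reduced ys \<Longrightarrow> freely_reduced (red_cons x ys)"
  by (cases ys rule: freely_reduced.cases) (auto simp: red_cons_def)

lemma freely_reduced_foldr_red_cons: "freely_reduced r \<Longrightarrow> freely_reduced (foldr red_cons u r)"
  by (induction u) (simp_all add: freely_reduced_red_cons)

lemma freely_reduced_reduce: "freely_reduced (reduce u)"
  by (induction u) (simp_all add: reduce_Cons_red_cons freely_reduced_red_cons)

lemma reduce_freely_reduced: "freely_reduced u \<Longrightarrow> reduce u = u"
  by (induction u rule: freely_reduced.induct) (auto simp: reduce_Cons_red_cons red_cons_def)

lemma red_cons_cancel:
  assumes "freely_reduced ys" "cancels x y"
  shows "red_cons x (red_cons y ys) = ys"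
proof -
  have "x = z" if "cancels y z" for z
    using assms(2) that by (cases x; cases y; cases z) (auto simp: cancels_def)
  then show ?thesis
    using assms by (cases ys rule: freely_reduced.cases) (auto simp: red_cons_def)
qed

lemma foldr_red_cons_red_cons:
  "freely_reduced r \<Longrightarrow> foldr red_cons (red_cons x s) r = red_cons x (foldr red_cons s r)"
proof (cases s)
  case (Cons y s')
  moreover assume "freely_reduced r"
  ultimately show ?thesis
    using red_cons_cancel[of "foldr red_cons s' r" x y] freely_reduced_foldr_red_cons
    by (simp add: red_cons_def)
qed (simp add: red_cons_def)

lemma foldr_red_cons_reduce: "freely_reduced r \<Longrightarrow> foldr red_cons (reduce u) r = foldr red_cons u r"
  by (induction u) (simp_all add: reduce_Cons_red_cons foldr_red_cons_red_cons)

lemma reduce_reduce_append: "reduce (reduce u @ v) = reduce (u @ v)"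
  by (simp add: reduce_append foldr_red_cons_reduce freely_reduced_reduce)

lemma reduce_append_reduce: "reduce (u @ reduce v) = reduce (u @ v)"
  by (simp add: reduce_append reduce_freely_reduced freely_reduced_reduce)

lemma set_reduce_subset: "set (reduce u) \<subseteq> set u"
  by (induction u) (auto simp: reduce_Cons_red_cons red_cons_def split: list.splits)

definition inv_letter :: "letter \<Rightarrow> letter" where
  "inv_letter x = (fst x, \<not> snd x)"

definition inv_word :: "letter list \<Rightarrow> letter list" where
  "inv_word u = rev (map inv_letter u)"

lemma foldr_red_cons_inv_word: "freely_reduced r \<Longrightarrow> foldr red_cons u (foldr red_cons (inv_word u) r) = r"
proof (induction u arbitrary: r)
  case (Cons x u)
  have "cancels x (inv_letter x)"
    by (simp add: cancels_def inv_letter_def)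
  with Cons show ?case
    by (simp add: inv_word_def red_cons_cancel freely_reduced_red_cons)
qed (simp add: inv_word_def)

lemma inv_word_inv_word [simp]: "inv_word (inv_word u) = u"
  by (simp add: inv_word_def rev_map inv_letter_def o_def)

lemma reduce_append_inv_word: "reduce (u @ inv_word u) = []"
  using foldr_red_cons_inv_word[of "[]" u] reduce_append[of u "inv_word u"]
    reduce_append[of "inv_word u" "[]"] by simp

lemma reduce_inv_word_append: "reduce (inv_word u @ u) = []"
  using reduce_append_inv_word[of "inv_word u"] by simp

lemma carrier_free_grp: "carrier (free_grp n) = {u. freely_reduced u \<and> (\<forall>x\<in>set u. fst x < n)}"
  by (simp add: free_grp_def)

lemma free_grp_mult: "u \<otimes>\<^bsub>free_grp n\<^esub> v = reduce (u @ v)"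
  and free_grp_one: "\<one>\<^bsub>free_grp n\<^esub> = []"
  by (simp_all add: free_grp_def)

lemma reduce_in_free_grp: "\<forall>x\<in>set u. fst x < n \<Longrightarrow> reduce u \<in> carrier (free_grp n)"
  using set_reduce_subset[of u] by (auto simp: carrier_free_grp freely_reduced_reduce)

lemma reduce_inv_word_in_free_grp: "u \<in> carrier (free_grp n) \<Longrightarrow> reduce (inv_word u) \<in> carrier (free_grp n)"
  by (rule reduce_in_free_grp) (force simp: carrier_free_grp inv_word_def inv_letter_def)

lemma group_free_grp: "group (free_grp n)"
proof (rule groupI)
  fix u v assume "u \<in> carrier (free_grp n)" "v \<in> carrier (free_grp n)"
  then show "u \<otimes>\<^bsub>free_grp n\<^esub> v \<in> carrier (free_grp n)"
    unfolding free_grp_mult by (intro reduce_in_free_grp) (auto simp: carrier_free_grp)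
next
  fix u assume "u \<in> carrier (free_grp n)"
  then show "\<exists>v\<in>carrier (free_grp n). v \<otimes>\<^bsub>free_grp n\<^esub> u = \<one>\<^bsub>free_grp n\<^esub>"
    using reduce_inv_word_in_free_grp
    by (metis free_grp_mult free_grp_one reduce_inv_word_append reduce_reduce_append)
qed (auto simp: carrier_free_grp free_grp_mult free_grp_one reduce_freely_reduced
      reduce_reduce_append reduce_append_reduce)

lemma free_grp_inv: "u \<in> carrier (free_grp n) \<Longrightarrow> inv\<^bsub>free_grp n\<^esub> u = reduce (inv_word u)"
  by (rule group.inv_equality[OF group_free_grp])
    (simp_all add: reduce_inv_word_in_free_grp free_grp_mult free_grp_one reduce_reduce_append
      reduce_inv_word_append)

section \<open>Signed products and derived subgroups\<close>

definition signed_count :: "('a \<times> bool) list \<Rightarrow> 'a \<Rightarrow> int" where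
  "signed_count L a = int (count (mset L) (a, False)) - int (count (mset L) (a, True))"

lemma signed_count_Nil [simp]: "signed_count [] = 0"
  by (simp add: signed_count_def fun_eq_iff)

lemma signed_count_append: "signed_count (L @ M) = signed_count L + signed_count M"
  by (simp add: signed_count_def fun_eq_iff)

lemma signed_count_Cons: "signed_count (p # L) = signed_count [p] + signed_count L"
  using signed_count_append[of "[p]" L] by simp

lemma signed_count_single: "signed_count [(a, s)] b = (if a = b then (if s then -1 else 1) else 0)"
  by (simp add: signed_count_def)

lemma signed_count_eq_sum_list:
  "signed_count L a = (\<Sum>p\<leftarrow>L. if fst p = a then (if snd p then -1 else 1) else 0)"
proof (induction L)
  case (Cons p L)
  obtain b s where "p = (b, s)"
    by fastforce
  with Cons show ?case
    using fun_cong[OF signed_count_Cons[of p L], of a] by (simp add: signed_count_single)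
qed simp

lemma signed_count_eq_0_Cons:
  assumes "signed_count ((y, s) # R) = 0"
  obtains R1 R2 where "R = R1 @ (y, \<not> s) # R2" and "signed_count (R1 @ R2) = 0"
proof -
  have "(y, \<not> s) \<in> set R"
  proof (rule ccontr)
    assume "(y, \<not> s) \<notin> set R"
    then have "count (mset R) (y, \<not> s) = 0"
      by (simp add: count_eq_zero_iff)
    then show False
      using fun_cong[OF assms, of y] by (cases s) (simp_all add: signed_count_def del: count_mset_0_iff)
  qed
  then obtain R1 R2 where R: "R = R1 @ (y, \<not> s) # R2"
    by (meson split_list)
  have "signed_count (R1 @ R2) a = signed_count ((y, s) # R) a" for a
    unfolding R by (cases s; cases "a = y") (simp_all add: signed_count_def)
  with assms have "signed_count (R1 @ R2) = 0"
    by (simp add: fun_eq_iff)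
  with R that show ?thesis
    by blast
qed

lemma signed_count_eq_0_induct [consumes 1, case_names Nil pair]:
  assumes "signed_count L = 0"
    and "P []"
    and "\<And>y s R1 R2. signed_count (R1 @ R2) = 0 \<Longrightarrow> P (R1 @ R2) \<Longrightarrow> P ((y, s) # R1 @ (y, \<not> s) # R2)"
  shows "P L"
  using assms(1)
proof (induction "length L" arbitrary: L rule: less_induct)
  case less
  show ?case
  proof (cases L)
    case (Cons p R)
    obtain y s where p: "p = (y, s)"
      by fastforce
    with less.prems Cons obtain R1 R2 where R: "R = R1 @ (y, \<not> s) # R2" and R12: "signed_count (R1 @ R2) = 0"
      using signed_count_eq_0_Cons by metis
    then have "P (R1 @ R2)"
      using less.hyps[of "R1 @ R2"] by (simp add: Cons)
    with R12 show ?thesis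
      unfolding Cons p R by (rule assms(3))
  qed (simp add: assms(2))
qed

definition signed_prod :: "('a, 'b) monoid_scheme \<Rightarrow> ('a \<times> bool) list \<Rightarrow> 'a" where
  "signed_prod G L = foldr (\<lambda>p r. (if snd p then inv\<^bsub>G\<^esub> fst p else fst p) \<otimes>\<^bsub>G\<^esub> r) L \<one>\<^bsub>G\<^esub>"

lemma signed_prod_Nil [simp]: "signed_prod G [] = \<one>\<^bsub>G\<^esub>"
  and signed_prod_Cons: "signed_prod G (p # L) = (if snd p then inv\<^bsub>G\<^esub> fst p else fst p) \<otimes>\<^bsub>G\<^esub> signed_prod G L"
  by (simp_all add: signed_prod_def)

context group
begin

lemma signed_prod_closed: "subgroup H G \<Longrightarrow> fst ` set L \<subseteq> H \<Longrightarrow> signed_prod G L \<in> H"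
  by (induction L) (auto simp: signed_prod_Cons subgroup.one_closed subgroup.m_closed subgroup.m_inv_closed)

lemma signed_prod_append:
  "fst ` set L \<subseteq> carrier G \<Longrightarrow> fst ` set M \<subseteq> carrier G \<Longrightarrow>
    signed_prod G (L @ M) = signed_prod G L \<otimes> signed_prod G M"
  by (induction L) (auto simp: signed_prod_Cons m_assoc signed_prod_closed[OF subgroup_self])

text \<open>Moving the factor \<open>y\<^sup>\<plusminus>\<^sup>1\<close> past \<open>P\<close> to meet its inverse costs the commutator \<open>[y\<^sup>\<plusminus>\<^sup>1, P]\<close>.\<close>

lemma signed_prod_pair:
  fixes s :: bool
  assumes "y \<in> carrier G" "fst ` set R1 \<subseteq> carrier G" "fst ` set R2 \<subseteq> carrier G"
  defines "y' \<equiv> if s then inv y else y" and "P \<equiv> signed_prod G R1"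
  shows "signed_prod G ((y, s) # R1 @ (y, \<not> s) # R2) = (y' \<otimes> P \<otimes> inv y' \<otimes> inv P) \<otimes> signed_prod G (R1 @ R2)"
proof -
  have c: "y' \<in> carrier G" "P \<in> carrier G" "signed_prod G R2 \<in> carrier G"
    using assms by (simp_all add: signed_prod_closed[OF subgroup_self])
  have "(if \<not> s then inv y else y) = inv y'"
    using assms(1) by (simp add: y'_def)
  then have "signed_prod G ((y, s) # R1 @ (y, \<not> s) # R2) = y' \<otimes> (P \<otimes> (inv y' \<otimes> signed_prod G R2))"
    using assms by (simp add: signed_prod_Cons signed_prod_append y'_def)
  also have "\<dots> = (y' \<otimes> P \<otimes> inv y' \<otimes> inv P) \<otimes> (P \<otimes> signed_prod G R2)"
  proof -
    have "inv P \<otimes> (P \<otimes> signed_prod G R2) = signed_prod G R2"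
      using c by (simp add: m_assoc[symmetric])
    with c show ?thesis by (simp add: m_assoc)
  qed
  also have "P \<otimes> signed_prod G R2 = signed_prod G (R1 @ R2)"
    using assms by (simp add: signed_prod_append)
  finally show ?thesis .
qed

lemma signed_prod_in_derived:
  assumes H: "subgroup H G" and "signed_count L = 0" and "f ` fst ` set L \<subseteq> H"
  shows "signed_prod G (map (apfst f) L) \<in> derived G H"
  using assms(2,3)
proof (induction rule: signed_count_eq_0_induct)
  case Nil
  show ?case
    unfolding derived_def list.map signed_prod_Nil by (rule generate.one)
next
  case (pair y s R1 R2)
  have HG: "H \<subseteq> carrier G"
    using H by (rule subgroup.subset)
  have fst_map: "fst ` apfst f ` A = f ` fst ` A" for A :: "('c \<times> bool) set"
    by (simp add: image_image)
  have y: "f y \<in> H" and R1: "fst ` set (map (apfst f) R1) \<subseteq> H" and R2: "fst ` set (map (apfst f) R2) \<subseteq> H"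
    using pair.prems by (simp_all add: fst_map image_Un)
  define y' where "y' = (if s then inv f y else f y)"
  define P where "P = signed_prod G (map (apfst f) R1)"
  have "y' \<in> H" "P \<in> H"
    using y R1 H by (simp_all add: y'_def P_def subgroup.m_inv_closed signed_prod_closed)
  then have comm: "y' \<otimes> P \<otimes> inv y' \<otimes> inv P \<in> derived G H"
    unfolding derived_def by (intro generate.incl UN_I) auto
  have rest: "signed_prod G (map (apfst f) (R1 @ R2)) \<in> derived G H"
    using pair.IH pair.prems by (simp add: image_Un)
  have "signed_prod G (map (apfst f) ((y, s) # R1 @ (y, \<not> s) # R2))
      = (y' \<otimes> P \<otimes> inv y' \<otimes> inv P) \<otimes> signed_prod G (map (apfst f) (R1 @ R2))"
    unfolding y'_def P_def list.map map_append apfst_conv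
    using y R1 R2 HG by (intro signed_prod_pair) auto
  also have "\<dots> \<in> derived G H"
    using comm rest by (rule subgroup.m_closed[OF derived_is_subgroup[OF HG]])
  finally show ?case .
qed

end

section \<open>The derived subgroups of the free group\<close>

lemma signed_count_red_cons: "signed_count (red_cons x ys) = signed_count [x] + signed_count ys"
proof (cases ys)
  case (Cons y ys')
  have "signed_count [x] + signed_count [y] = 0" if "cancels x y"
    using that by (cases x; cases y) (auto simp: cancels_def signed_count_single fun_eq_iff)
  then show ?thesis
    using Cons signed_count_Cons[of x ys] signed_count_Cons[of y ys']
    by (auto simp: red_cons_def add.assoc[symmetric])
qed (simp add: red_cons_def)

lemma signed_count_reduce [simp]: "signed_count (reduce u) = signed_count u"
proof (induction u)
  case (Cons x u)
  then show ?case
    by (simp add: reduce_Cons_red_cons signed_count_red_cons signed_count_Cons[of x u])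
qed simp

lemma signed_count_inv_word: "signed_count (inv_word u) = - signed_count u"
proof (induction u)
  case (Cons x u)
  have "signed_count [inv_letter x] = - signed_count [x]"
    by (cases x) (simp add: inv_letter_def signed_count_single fun_eq_iff)
  with Cons show ?case
    by (simp add: inv_word_def signed_count_append signed_count_Cons[of x u] algebra_simps)
qed (simp add: inv_word_def)

lemma signed_count_free_grp_mult:
  "signed_count (u \<otimes>\<^bsub>free_grp n\<^esub> v) = signed_count u + signed_count v"
  by (simp add: free_grp_mult signed_count_append)

lemma signed_count_free_grp_inv:
  "u \<in> carrier (free_grp n) \<Longrightarrow> signed_count (inv\<^bsub>free_grp n\<^esub> u) = - signed_count u"
  by (simp add: free_grp_inv signed_count_inv_word)

lemma generator_in_free_grp: "i < n \<Longrightarrow> [(i, s)] \<in> carrier (free_grp n)"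
  by (simp add: carrier_free_grp)

lemma free_grp_inv_generator: "i < n \<Longrightarrow> inv\<^bsub>free_grp n\<^esub> [(i, False)] = [(i, True)]"
  by (simp add: free_grp_inv generator_in_free_grp inv_word_def inv_letter_def reduce_Cons_red_cons red_cons_def)

lemma signed_prod_generators:
  "\<forall>x\<in>set u. fst x < n \<Longrightarrow> signed_prod (free_grp n) (map (apfst (\<lambda>i. [(i, False)])) u) = reduce u"
proof (induction u)
  case (Cons x u)
  obtain i s where x: "x = (i, s)"
    by fastforce
  with Cons have "signed_prod (free_grp n) (map (apfst (\<lambda>i. [(i, False)])) (x # u)) = [x] \<otimes>\<^bsub>free_grp n\<^esub> reduce u"
    by (simp add: signed_prod_Cons free_grp_inv_generator)
  then show ?case
    by (simp add: free_grp_mult reduce_Cons_red_cons reduce_freely_reduced freely_reduced_reduce)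
qed (simp add: free_grp_one)

lemma derived_free_grp:
  "derived (free_grp n) (carrier (free_grp n)) = {u \<in> carrier (free_grp n). signed_count u = 0}"
  (is "?D = ?Z")
proof
  interpret group "free_grp n" by (rule group_free_grp)
  have "subgroup ?Z (free_grp n)"
  proof
    show "\<one>\<^bsub>free_grp n\<^esub> \<in> ?Z"
      by (simp add: free_grp_one carrier_free_grp)
  qed (auto simp: signed_count_free_grp_mult signed_count_free_grp_inv)
  moreover have "derived_set (free_grp n) (carrier (free_grp n)) \<subseteq> ?Z"
    by (auto simp: signed_count_free_grp_mult signed_count_free_grp_inv)
  ultimately show "?D \<subseteq> ?Z"
    unfolding derived_def by (rule generate_subgroup_incl[rotated])
  show "?Z \<subseteq> ?D"
  proof safe
    fix u assume u: "u \<in> carrier (free_grp n)" "signed_count u = 0"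
    then have "signed_prod (free_grp n) (map (apfst (\<lambda>i. [(i, False)])) u) \<in> ?D"
      by (intro signed_prod_in_derived subgroup_self) (auto simp: carrier_free_grp generator_in_free_grp)
    with u show "u \<in> ?D"
      by (simp add: signed_prod_generators carrier_free_grp reduce_freely_reduced)
  qed
qed

section \<open>Schreier generators of the commutator subgroup\<close>

definition balancing_word :: "nat \<Rightarrow> (nat \<Rightarrow> int) \<Rightarrow> letter list" where
  "balancing_word n q = reduce (concat (map (\<lambda>j. replicate (nat \<bar>q j\<bar>) (j, 0 < q j)) [0..<n]))"

lemma balancing_word_in_free_grp: "balancing_word n q \<in> carrier (free_grp n)"
  unfolding balancing_word_def by (rule reduce_in_free_grp) auto

lemma signed_count_replicate: "signed_count (replicate k x) = (\<lambda>j. int k * signed_count [x] j)"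
proof (induction k)
  case (Suc k)
  then show ?case
    by (simp add: signed_count_Cons[of x "replicate k x"] fun_eq_iff algebra_simps)
qed simp

lemma signed_count_balancing_word: "signed_count (balancing_word n q) j = (if j < n then - q j else 0)"
proof (induction n)
  case (Suc n)
  have "balancing_word (Suc n) q = reduce (concat (map (\<lambda>j. replicate (nat \<bar>q j\<bar>) (j, 0 < q j)) [0..<n])
      @ replicate (nat \<bar>q n\<bar>) (n, 0 < q n))"
    by (simp add: balancing_word_def)
  with Suc show ?case
    by (auto simp: balancing_word_def signed_count_append signed_count_replicate signed_count_single
        less_Suc_eq)
qed (simp add: balancing_word_def)

lemma balancing_word_eq_Nil: "\<forall>j. q j = 0 \<Longrightarrow> balancing_word n q = []"
  by (simp add: balancing_word_def map_replicate_const)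

text \<open>
  \<open>balancing_word n q\<close> is \<open>t(-q)\<close> for \<open>t(p) = g\<^sub>0^p\<^sub>0 \<cdots> g\<^sub>n\<^sub>-\<^sub>1^p\<^sub>n\<^sub>-\<^sub>1\<close>, so these are the Schreier
  generators \<open>t(p) g\<^sub>i t(p + e\<^sub>i)\<inverse>\<close> of \<open>F'\<close>, indexed by \<open>q = -p - e\<^sub>i\<close>.\<close>

definition schreier_elem :: "nat \<Rightarrow> (nat \<Rightarrow> int) \<Rightarrow> nat \<Rightarrow> letter list" where
  "schreier_elem n q i = balancing_word n (q + signed_count [(i, False)]) \<otimes>\<^bsub>free_grp n\<^esub> [(i, False)]
     \<otimes>\<^bsub>free_grp n\<^esub> inv\<^bsub>free_grp n\<^esub> balancing_word n q"

lemma schreier_elem_in_derived: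
  assumes "i < n" and "\<forall>j\<ge>n. q j = 0"
  shows "schreier_elem n q i \<in> derived (free_grp n) (carrier (free_grp n))"
proof -
  interpret group "free_grp n" by (rule group_free_grp)
  have "schreier_elem n q i \<in> carrier (free_grp n)"
    using assms(1) by (simp add: schreier_elem_def balancing_word_in_free_grp generator_in_free_grp)
  moreover have "signed_count (schreier_elem n q i) = 0"
    using assms unfolding schreier_elem_def
    by (auto simp: signed_count_free_grp_mult signed_count_free_grp_inv balancing_word_in_free_grp
        signed_count_balancing_word signed_count_single fun_eq_iff)
  ultimately show ?thesis
    by (simp add: derived_free_grp)
qed

text \<open>Each letter \<open>g\<^sub>i\<^sup>\<plusminus>\<^sup>1\<close> of a word is rewritten into the Schreier generator with key \<open>(q, i)\<close>, where \<open>q\<close>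
  is the exponent sum of the suffix after the letter (for \<open>g\<^sub>i\<close>) or starting with it (for \<open>g\<^sub>i\<inverse>\<close>).\<close>

fun schreier_keys :: "letter list \<Rightarrow> (((nat \<Rightarrow> int) \<times> nat) \<times> bool) list" where
  "schreier_keys [] = []"
| "schreier_keys (x # u) = ((signed_count (if snd x then x # u else u), fst x), snd x) # schreier_keys u"

lemma schreier_keys_suffix:
  "((q, i), s) \<in> set (schreier_keys u) \<Longrightarrow> (i, s) \<in> set u \<and> (\<exists>v. suffix v u \<and> q = signed_count v)"
  by (induction u) (auto intro: suffix_ConsI)

lemma signed_count_eq_0_outside:
  fixes u :: "letter list"
  assumes "\<forall>x\<in>set u. fst x < n" and "n \<le> j"
  shows "signed_count u j = 0"
proof -
  have "count (mset u) (j, s) = 0" for s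
    using assms by (auto simp: count_eq_zero_iff)
  then show ?thesis
    by (simp add: signed_count_def del: count_mset_0_iff)
qed

lemma abs_signed_count_le: "\<bar>signed_count L a\<bar> \<le> int (length L)"
  by (induction L) (auto simp: signed_count_def)

lemma schreier_keys_bounded:
  assumes letters: "\<forall>x\<in>set w. fst x < n" and key: "((q, i), s) \<in> set (schreier_keys w)"
  shows "i < n" and "\<forall>j\<ge>n. q j = 0" and "\<forall>j. \<bar>q j\<bar> \<le> int (length w)"
proof -
  obtain v where "(i, s) \<in> set w" "suffix v w" "q = signed_count v"
    using schreier_keys_suffix[OF key] by blast
  moreover from this have "\<forall>x\<in>set v. fst x < n" "length v \<le> length w"
    using letters set_mono_suffix suffix_length_le by blast+
  ultimately show "i < n" "\<forall>j\<ge>n. q j = 0"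
    using letters signed_count_eq_0_outside by auto
  show "\<forall>j. \<bar>q j\<bar> \<le> int (length w)"
    using \<open>q = signed_count v\<close> \<open>length v \<le> length w\<close> abs_signed_count_le[of v] by (metis order_trans of_nat_le_iff)
qed

context group
begin

lemma telescope_mult:
  "\<lbrakk>a \<in> carrier G; g \<in> carrier G; c \<in> carrier G; r \<in> carrier G\<rbrakk>
    \<Longrightarrow> (a \<otimes> g \<otimes> inv c) \<otimes> (c \<otimes> r) = a \<otimes> (g \<otimes> r)"
  by (simp add: m_assoc) (simp add: m_assoc[symmetric])

lemma telescope_inv_mult:
  "\<lbrakk>a \<in> carrier G; g \<in> carrier G; c \<in> carrier G; r \<in> carrier G\<rbrakk>
    \<Longrightarrow> inv (a \<otimes> g \<otimes> inv c) \<otimes> (a \<otimes> r) = c \<otimes> (inv g \<otimes> r)"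
  by (simp add: m_assoc inv_mult_group) (simp add: m_assoc[symmetric])

end

lemma signed_prod_schreier_keys:
  assumes "\<forall>x\<in>set u. fst x < n"
  shows "signed_prod (free_grp n) (map (apfst (\<lambda>(q, i). schreier_elem n q i)) (schreier_keys u))
    = balancing_word n (signed_count u) \<otimes>\<^bsub>free_grp n\<^esub> reduce u"
  using assms
proof (induction u)
  case Nil
  then show ?case
    by (simp add: balancing_word_eq_Nil free_grp_mult free_grp_one)
next
  case (Cons x u)
  interpret group "free_grp n" by (rule group_free_grp)
  obtain i s where x: "x = (i, s)"
    by fastforce
  define e where "e = signed_count [(i, False)]"
  define P where "P = signed_prod (free_grp n) (map (apfst (\<lambda>(q, i). schreier_elem n q i)) (schreier_keys (x # u)))"
  have carr: "[(i, False)] \<in> carrier (free_grp n)" "reduce u \<in> carrier (free_grp n)"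
    "\<And>q. balancing_word n q \<in> carrier (free_grp n)"
    using Cons.prems x by (auto intro: generator_in_free_grp reduce_in_free_grp balancing_word_in_free_grp)
  have red: "(if s then inv\<^bsub>free_grp n\<^esub> [(i, False)] else [(i, False)]) \<otimes>\<^bsub>free_grp n\<^esub> reduce u = reduce (x # u)"
    using Cons.prems x
    by (simp add: free_grp_inv_generator free_grp_mult reduce_Cons_red_cons reduce_freely_reduced
        freely_reduced_reduce)
  show ?case
  proof (cases s)
    case False
    have "signed_count (x # u) = signed_count u + e"
      using signed_count_Cons[of x u] by (simp add: x False e_def add.commute)
    moreover have "P = schreier_elem n (signed_count u) i \<otimes>\<^bsub>free_grp n\<^esub>
        (balancing_word n (signed_count u) \<otimes>\<^bsub>free_grp n\<^esub> reduce u)"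
      using Cons by (simp add: P_def x False signed_prod_Cons)
    ultimately have "P = balancing_word n (signed_count (x # u)) \<otimes>\<^bsub>free_grp n\<^esub>
        ([(i, False)] \<otimes>\<^bsub>free_grp n\<^esub> reduce u)"
      unfolding schreier_elem_def e_def by (simp add: telescope_mult carr)
    with red False show ?thesis
      by (simp add: P_def)
  next
    case True
    have "signed_count [(i, True)] + e = 0"
      by (simp add: e_def signed_count_single fun_eq_iff)
    then have "signed_count (x # u) + e = signed_count u"
      using signed_count_Cons[of x u] by (simp add: x True algebra_simps)
    moreover have "P = inv\<^bsub>free_grp n\<^esub> schreier_elem n (signed_count (x # u)) i \<otimes>\<^bsub>free_grp n\<^esub>
        (balancing_word n (signed_count u) \<otimes>\<^bsub>free_grp n\<^esub> reduce u)"
      using Cons by (simp add: P_def x True signed_prod_Cons)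
    ultimately have "P = balancing_word n (signed_count (x # u)) \<otimes>\<^bsub>free_grp n\<^esub>
        (inv\<^bsub>free_grp n\<^esub> [(i, False)] \<otimes>\<^bsub>free_grp n\<^esub> reduce u)"
      unfolding schreier_elem_def e_def by (simp add: telescope_inv_mult carr)
    with red True show ?thesis
      by (simp add: P_def)
  qed
qed

theorem schreier_keys_unbalanced:
  assumes "w \<in> derived (free_grp n) (carrier (free_grp n))"
    and "w \<notin> derived (free_grp n) (derived (free_grp n) (carrier (free_grp n)))"
  shows "signed_count (schreier_keys w) \<noteq> 0"
proof
  interpret group "free_grp n" by (rule group_free_grp)
  let ?D = "derived (free_grp n) (carrier (free_grp n))"
  assume "signed_count (schreier_keys w) = 0"
  have w: "w \<in> carrier (free_grp n)" "signed_count w = 0"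
    using assms(1) by (simp_all add: derived_free_grp)
  then have letters: "\<forall>x\<in>set w. fst x < n"
    by (simp add: carrier_free_grp)
  have "schreier_elem n q i \<in> ?D" if "((q, i), s) \<in> set (schreier_keys w)" for q i s
    using schreier_keys_bounded(1,2)[OF letters that] by (rule schreier_elem_in_derived)
  then have "(\<lambda>(q, i). schreier_elem n q i) ` fst ` set (schreier_keys w) \<subseteq> ?D"
    by auto
  then have "signed_prod (free_grp n) (map (apfst (\<lambda>(q, i). schreier_elem n q i)) (schreier_keys w))
      \<in> derived (free_grp n) ?D"
    using \<open>signed_count (schreier_keys w) = 0\<close> by (intro signed_prod_in_derived derived_is_subgroup) auto
  moreover have "signed_prod (free_grp n) (map (apfst (\<lambda>(q, i). schreier_elem n q i)) (schreier_keys w)) = w"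
    using w letters
    by (simp add: signed_prod_schreier_keys balancing_word_eq_Nil free_grp_mult carrier_free_grp reduce_freely_reduced)
  ultimately show False
    using assms(2) by simp
qed

section \<open>An upper triangular representation\<close>

definition mat2 :: "'a::zero \<Rightarrow> 'a \<Rightarrow> 'a \<Rightarrow> 'a \<Rightarrow> 'a^2^2" where
  "mat2 a b c d = (\<chi> i j. if i = 1 then (if j = 1 then a else b) else (if j = 1 then c else d))"

lemma mat2_nth [simp]:
  "mat2 a b c d $ 1 $ 1 = a" "mat2 a b c d $ 1 $ 2 = b" "mat2 a b c d $ 2 $ 1 = c" "mat2 a b c d $ 2 $ 2 = d"
  by (simp_all add: mat2_def)

lemma eq_mat2_iff: "(A::'a::zero^2^2) = mat2 a b c d \<longleftrightarrow> A$1$1 = a \<and> A$1$2 = b \<and> A$2$1 = c \<and> A$2$2 = d"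
  by (auto simp: vec_eq_iff forall_2)

lemma mat2_mult [simp]:
  "mat2 a b c d ** mat2 a' b' c' d' = mat2 (a*a' + b*c') (a*b' + b*d') (c*a' + d*c') (c*b' + d*(d'::'a::semiring_1))"
  by (simp add: eq_mat2_iff matrix_matrix_mult_def sum_2)

lemma mat_1_eq_mat2: "(mat 1 :: 'a::zero_neq_one^2^2) = mat2 1 0 0 1"
  by (simp add: eq_mat2_iff mat_def)

lemma det_mat2 [simp]: "det (mat2 a b c (d::'a::comm_ring_1)) = a * d - b * c"
  by (simp add: det_2)

lemma matrix_inv_unique:
  fixes A B :: "'a::semiring_1^'n^'n"
  assumes "A ** B = mat 1" "B ** A = mat 1"
  shows "matrix_inv A = B"
proof -
  have "A ** matrix_inv A = mat 1 \<and> matrix_inv A ** A = mat 1"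
    unfolding matrix_inv_def by (rule someI[of _ B]) (use assms in blast)
  have "matrix_inv A = matrix_inv A ** (A ** B)"
    by (simp add: assms(1) matrix_mul_rid)
  also have "\<dots> = (matrix_inv A ** A) ** B"
    by (simp add: matrix_mul_assoc)
  also have "\<dots> = B"
    using \<open>A ** matrix_inv A = mat 1 \<and> matrix_inv A ** A = mat 1\<close> by (simp add: matrix_mul_lid)
  finally show ?thesis .
qed

lemma matrix_inv_mat2:
  assumes "a * d - b * c = (1::'a::comm_ring_1)"
  shows "matrix_inv (mat2 a b c d) = mat2 d (-b) (-c) a"
  by (rule matrix_inv_unique)
    (use assms in \<open>simp_all add: mat_1_eq_mat2 eq_mat2_iff algebra_simps\<close>)

definition upper_tri :: "'a::field \<Rightarrow> int \<Rightarrow> 'a \<Rightarrow> 'a^2^2" where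
  "upper_tri T e s = mat2 (T powi e) (T powi e * s) 0 (T powi (- e))"

lemma det_upper_tri: "T \<noteq> 0 \<Longrightarrow> det (upper_tri T e s) = 1"
  by (simp add: upper_tri_def power_int_minus)

lemma upper_tri_mult:
  assumes "T \<noteq> 0"
  shows "upper_tri T e s ** upper_tri T e' s' = upper_tri T (e + e') (s * T powi (- 2 * e') + s')"
proof -
  define a b where "a = T powi e" and "b = T powi e'"
  have "a \<noteq> 0" "b \<noteq> 0"
    using assms by (simp_all add: a_def b_def)
  have add: "T powi (k + l) = T powi k * T powi l" for k l
    using assms by (rule power_int_add[OF disjI1])
  have "- 2 * e' = - (e' + e')"
    by simp
  then have exps: "T powi (e + e') = a * b" "T powi (- (e + e')) = inverse a * inverse b"
    "T powi (- 2 * e') = inverse b * inverse b" "T powi (- e) = inverse a" "T powi (- e') = inverse b"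
    by (simp_all only: a_def b_def add power_int_minus inverse_mult_distrib)
  have "a * b * (s * (inverse b * inverse b) + s') = a * (b * s') + a * s * inverse b"
    using \<open>b \<noteq> 0\<close> by (simp add: field_simps)
  then show ?thesis
    unfolding upper_tri_def exps mat2_mult a_def[symmetric] b_def[symmetric] by (simp add: eq_mat2_iff)
qed

lemma matrix_inv_upper_tri:
  assumes "T \<noteq> 0"
  shows "matrix_inv (upper_tri T e s) = upper_tri T (- e) (- s * T powi (2 * e))"
proof -
  define a where "a = T powi e"
  have "a \<noteq> 0"
    using assms by (simp add: a_def)
  have "T powi (e + e) = a * a"
    unfolding a_def using assms by (rule power_int_add[OF disjI1])
  then have exps: "T powi (2 * e) = a * a" "T powi (- e) = inverse a"
    by (simp_all only: mult_2 a_def power_int_minus)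
  then show ?thesis
    unfolding upper_tri_def exps minus_minus a_def[symmetric]
    using \<open>a \<noteq> 0\<close> by (subst matrix_inv_mat2) (simp_all add: field_simps)
qed

lemma upper_tri_0: "upper_tri T 0 s = mat2 1 s 0 1"
  by (simp add: upper_tri_def)

definition weight :: "nat \<Rightarrow> (nat \<Rightarrow> int) \<Rightarrow> (nat \<Rightarrow> int) \<Rightarrow> int" where
  "weight n D q = (\<Sum>j<n. D j * q j)"

lemma weight_add: "weight n D (p + q) = weight n D p + weight n D q"
  by (simp add: weight_def sum.distrib algebra_simps)

lemma weight_generator: "i < n \<Longrightarrow> weight n D (signed_count [(i, s)]) = (if s then - D i else D i)"
  by (simp add: weight_def signed_count_single if_distrib[of "\<lambda>x. _ * x"] cong: if_cong)

definition tri_rep :: "'a::field \<Rightarrow> (nat \<Rightarrow> int) \<Rightarrow> (nat \<Rightarrow> 'a) \<Rightarrow> nat \<Rightarrow> 'a^2^2" where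
  "tri_rep T D \<beta> i = upper_tri T (D i) (\<beta> i * T powi (- D i))"

definition tri_term :: "'a::field \<Rightarrow> nat \<Rightarrow> (nat \<Rightarrow> int) \<Rightarrow> (nat \<Rightarrow> 'a) \<Rightarrow> ((nat \<Rightarrow> int) \<times> nat) \<times> bool \<Rightarrow> 'a" where
  "tri_term T n D \<beta> k = (let ((q, i), s) = k in (if s then -1 else 1) * \<beta> i * T powi (- D i - 2 * weight n D q))"

lemma word_map_Cons:
  "word_map (x # u) Z = (if snd x then matrix_inv (Z (fst x)) else Z (fst x)) ** word_map u Z"
  by (simp add: word_map_def)

lemma word_map_tri_rep:
  fixes T :: "'a::field"
  assumes T: "T \<noteq> 0" and "\<forall>x\<in>set u. fst x < n"
  shows "word_map u (tri_rep T D \<beta>)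
    = upper_tri T (weight n D (signed_count u)) (\<Sum>k\<leftarrow>schreier_keys u. tri_term T n D \<beta> k)"
  using assms(2)
proof (induction u)
  case Nil
  then show ?case
    by (simp add: word_map_def upper_tri_0 mat_1_eq_mat2 weight_def)
next
  case (Cons x u)
  obtain i s where x: "x = (i, s)"
    by fastforce
  have powi_add: "T powi (k + l) = T powi k * T powi l" for k l
    using T by (rule power_int_add[OF disjI1])
  define \<sigma> :: 'a where "\<sigma> = (if s then -1 else 1)"
  define e where "e = weight n D (signed_count [x])"
  define L where "L = weight n D (signed_count u)"
  define S where "S = (\<Sum>k\<leftarrow>schreier_keys u. tri_term T n D \<beta> k)"
  have e: "e = (if s then - D i else D i)"
    using Cons.prems by (simp add: e_def x weight_generator)
  have letter: "(if s then matrix_inv (tri_rep T D \<beta> i) else tri_rep T D \<beta> i)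
      = upper_tri T e (\<sigma> * \<beta> i * T powi (- e))"
  proof (cases s)
    case True
    have "T powi (- D i) * T powi (2 * D i) = T powi (D i)"
      using powi_add[of "- D i" "2 * D i"] by simp
    with True show ?thesis
      by (simp add: tri_rep_def matrix_inv_upper_tri[OF T] e \<sigma>_def mult.assoc)
  qed (simp add: tri_rep_def e \<sigma>_def)
  have "- D i - 2 * weight n D (signed_count (if s then x # u else u)) = - e + - 2 * L"
    using e by (simp add: L_def e_def signed_count_Cons[of x u] weight_add)
  moreover have "tri_term T n D \<beta> (hd (schreier_keys (x # u)))
      = \<sigma> * \<beta> i * T powi (- D i - 2 * weight n D (signed_count (if s then x # u else u)))"
    by (simp add: tri_term_def x \<sigma>_def)
  ultimately have first_term: "tri_term T n D \<beta> (hd (schreier_keys (x # u))) = \<sigma> * \<beta> i * T powi (- e) * T powi (- 2 * L)"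
    by (simp only: powi_add mult.assoc)
  have "word_map (x # u) (tri_rep T D \<beta>) = upper_tri T e (\<sigma> * \<beta> i * T powi (- e)) ** upper_tri T L S"
  proof -
    have "word_map u (tri_rep T D \<beta>) = upper_tri T L S"
      using Cons by (simp add: L_def S_def)
    then show ?thesis
      by (simp only: word_map_Cons x fst_conv snd_conv letter)
  qed
  also have "\<dots> = upper_tri T (e + L) (\<sigma> * \<beta> i * T powi (- e) * T powi (- 2 * L) + S)"
    by (rule upper_tri_mult[OF T])
  also have "e + L = weight n D (signed_count (x # u))"
    by (simp add: e_def L_def signed_count_Cons[of x u] weight_add)
  also have "\<sigma> * \<beta> i * T powi (- e) * T powi (- 2 * L) + S = (\<Sum>k\<leftarrow>schreier_keys (x # u). tri_term T n D \<beta> k)"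
    using first_term by (simp add: S_def)
  finally show ?case .
qed

section \<open>A nonvanishing off-diagonal entry\<close>

lemma ex_nonzero_laurent_value:
  fixes L :: "(int \<times> int) list"
  assumes "(\<Sum>(c, k)\<leftarrow>L. if k = k0 then c else 0) \<noteq> 0"
  shows "\<exists>T::'a::field_char_0. T \<noteq> 0 \<and> (\<Sum>(c, k)\<leftarrow>L. of_int c * T powi k) \<noteq> 0"
proof -
  define N where "N = (\<Sum>(c, k)\<leftarrow>L. \<bar>k\<bar>)"
  have "\<bar>k\<bar> \<le> N" if "(c, k) \<in> set L" for c k
    unfolding N_def using that by (intro member_le_sum_list) force+
  then have N: "- N \<le> k" if "(c, k) \<in> set L" for c k
    using that by fastforce
  have "k0 \<in> snd ` set L"
    using assms by (induction L) (auto split: if_splits)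
  then have "- N \<le> k0"
    using N by force
  define P :: "'a poly" where "P = (\<Sum>(c, k)\<leftarrow>L. monom (of_int c) (nat (k + N)))"
  have "coeff P (nat (k0 + N)) = (\<Sum>(c, k)\<leftarrow>L. if nat (k + N) = nat (k0 + N) then of_int c else 0)"
    unfolding P_def by (induction L) auto
  also have "\<dots> = (\<Sum>(c, k)\<leftarrow>L. of_int (if k = k0 then c else 0))"
  proof (intro arg_cong[where f = sum_list] map_cong refl)
    fix ck assume "ck \<in> set L"
    then show "(case ck of (c, k) \<Rightarrow> if nat (k + N) = nat (k0 + N) then of_int c else 0)
        = (case ck of (c, k) \<Rightarrow> of_int (if k = k0 then c else 0))"
      using N[of "fst ck" "snd ck"] \<open>- N \<le> k0\<close> by (auto simp: eq_nat_nat_iff split: prod.split)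
  qed
  also have "\<dots> = of_int (\<Sum>(c, k)\<leftarrow>L. if k = k0 then c else 0)"
    by (induction L) auto
  finally have "pCons 0 P \<noteq> 0"
    using assms by auto
  then obtain T where "poly (pCons 0 P) T \<noteq> 0"
    using poly_all_0_iff_0 by blast
  then have "T \<noteq> 0" "poly P T \<noteq> 0"
    by simp_all
  moreover have "poly P T = T powi N * (\<Sum>(c, k)\<leftarrow>L. of_int c * T powi k)"
  proof -
    have "poly P T = (\<Sum>(c, k)\<leftarrow>L. of_int c * T ^ nat (k + N))"
      unfolding P_def by (induction L) (auto simp: poly_monom)
    also have "\<dots> = (\<Sum>(c, k)\<leftarrow>L. T powi N * (of_int c * T powi k))"
    proof (intro arg_cong[where f = sum_list] map_cong refl)
      fix ck assume "ck \<in> set L"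
      then have "T ^ nat (snd ck + N) = T powi N * T powi snd ck"
        using N[of "fst ck" "snd ck"] \<open>T \<noteq> 0\<close>
        by (simp add: power_int_add[symmetric] add.commute flip: power_int_of_nat)
      then show "(case ck of (c, k) \<Rightarrow> of_int c * T ^ nat (k + N))
          = (case ck of (c, k) \<Rightarrow> T powi N * (of_int c * T powi k))"
        by (simp add: split_beta algebra_simps)
    qed
    also have "\<dots> = T powi N * (\<Sum>(c, k)\<leftarrow>L. of_int c * T powi k)"
      by (induction L) (auto simp: algebra_simps)
    finally show ?thesis .
  qed
  ultimately show ?thesis
    by auto
qed

lemma sum_powers_eq_0_imp_digits_eq_0:
  fixes B :: int
  assumes "\<forall>j<m. \<bar>d j\<bar> < B" and "(\<Sum>j<m. B ^ j * d j) = 0"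
  shows "\<forall>j<m. d j = 0"
  using assms
proof (induction m arbitrary: d)
  case (Suc m)
  have "d 0 + B * (\<Sum>j<m. B ^ j * d (Suc j)) = 0"
    using Suc.prems(2)[unfolded sum.lessThan_Suc_shift] by (simp add: sum_distrib_left mult.assoc)
  then have "B dvd d 0"
    by (metis add.commute add.right_neutral dvd_minus_iff dvd_triv_left eq_neg_iff_add_eq_0)
  moreover have "\<bar>d 0\<bar> < B"
    using Suc.prems(1) by simp
  ultimately have "d 0 = 0"
    using dvd_imp_le_int[of "d 0" B] by fastforce
  with \<open>d 0 + _ = 0\<close> \<open>\<bar>d 0\<bar> < B\<close> have "(\<Sum>j<m. B ^ j * d (Suc j)) = 0"
    by simp
  then have "\<forall>j<m. d (Suc j) = 0"
    using Suc.IH[of "d \<circ> Suc"] Suc.prems(1) by simp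
  with \<open>d 0 = 0\<close> show ?case
    by (auto simp: less_Suc_eq_0_disj)
qed simp

lemma weight_powers_inj:
  fixes R :: int
  assumes "\<forall>j. \<bar>q j\<bar> \<le> R" "\<forall>j. \<bar>q' j\<bar> \<le> R" "\<forall>j\<ge>n. q j = 0" "\<forall>j\<ge>n. q' j = 0"
    and "weight n (\<lambda>j. (2 * R + 1) ^ j) q = weight n (\<lambda>j. (2 * R + 1) ^ j) q'"
  shows "q = q'"
proof -
  have "(\<Sum>j<n. (2 * R + 1) ^ j * (q j - q' j)) = 0"
    using assms(5) by (simp add: weight_def algebra_simps sum_subtractf)
  moreover have "\<forall>j<n. \<bar>q j - q' j\<bar> < 2 * R + 1"
    using assms(1,2) by (smt (verit))
  ultimately have "\<forall>j<n. q j - q' j = 0"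
    by (rule sum_powers_eq_0_imp_digits_eq_0[rotated])
  with assms(3,4) show ?thesis
    by (metis eq_iff_diff_eq_0 ext not_le)
qed

lemma signed_count_nonzero_imp_mem:
  assumes "signed_count L a \<noteq> 0"
  shows "\<exists>s. (a, s) \<in> set L"
proof (rule ccontr)
  assume "\<not> ?thesis"
  then have "count (mset L) (a, s) = 0" for s
    by (simp add: count_eq_zero_iff)
  with assms show False
    by (simp add: signed_count_def del: count_mset_0_iff)
qed

text \<open>
  Put \<open>\<beta> = e\<^sub>i\<^sub>0\<close> and \<open>D\<^sub>j = (2R+1)\<^sup>j\<close> with \<open>R\<close> the length of \<open>w\<close>: then distinct keys \<open>(q, i\<^sub>0)\<close>
  contribute distinct powers of \<open>T\<close>, so the coefficient of the key \<open>(q\<^sub>0, i\<^sub>0)\<close> survives.\<close>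

lemma ex_tri_term_sum_nonzero:
  assumes letters: "\<forall>x\<in>set w. fst x < n" and "signed_count (schreier_keys w) \<noteq> 0"
  shows "\<exists>T D \<beta>. T \<noteq> (0::'a::field_char_0) \<and> (\<Sum>k\<leftarrow>schreier_keys w. tri_term T n D \<beta> k) \<noteq> 0"
proof -
  define K where "K = schreier_keys w"
  obtain q0 i0 where q0: "signed_count K (q0, i0) \<noteq> 0"
    using assms(2) unfolding K_def by (metis surj_pair zero_fun_def ext)
  define R where "R = int (length w)"
  define D where "D = (\<lambda>j. (2 * R + 1) ^ j)"
  define \<beta> :: "nat \<Rightarrow> 'a" where "\<beta> = (\<lambda>j. if j = i0 then 1 else 0)"
  define orient :: "((nat \<Rightarrow> int) \<times> nat) \<times> bool \<Rightarrow> int" where "orient = (\<lambda>e. if snd e then -1 else 1)"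
  define expo where "expo = (\<lambda>(q, i). - D i - 2 * weight n D q)"
  define L where "L = map (\<lambda>e. (if snd (fst e) = i0 then orient e else 0, expo (fst e))) K"
  have bounded: "(\<forall>j. \<bar>q j\<bar> \<le> R) \<and> (\<forall>j\<ge>n. q j = 0)" if "((q, i), s) \<in> set K" for q i s
    using schreier_keys_bounded[OF letters that[unfolded K_def]] by (simp add: R_def)
  obtain s0 where "((q0, i0), s0) \<in> set K"
    using signed_count_nonzero_imp_mem[OF q0] by blast
  have "(if expo (fst e) = expo (q0, i0) then if snd (fst e) = i0 then orient e else 0 else 0)
      = (if fst e = (q0, i0) then orient e else 0)" if "e \<in> set K" for e
  proof -
    obtain q i s where e: "e = ((q, i), s)"
      by (metis prod.collapse)
    have "q = q0" if "i = i0" "expo (q, i) = expo (q0, i0)"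
      using that bounded[OF \<open>e \<in> set K\<close>[unfolded e]] bounded[OF \<open>((q0, i0), s0) \<in> set K\<close>]
        weight_powers_inj[of q R q0 n] by (simp add: expo_def D_def)
    then show ?thesis
      by (auto simp: e)
  qed
  then have "(\<Sum>(c, k)\<leftarrow>L. if k = expo (q0, i0) then c else 0) = (\<Sum>e\<leftarrow>K. if fst e = (q0, i0) then orient e else 0)"
    unfolding L_def map_map comp_def prod.case by (intro arg_cong[where f = sum_list] map_cong) auto
  also have "\<dots> = signed_count K (q0, i0)"
    unfolding orient_def by (simp add: signed_count_eq_sum_list)
  finally obtain T :: 'a where T: "T \<noteq> 0" and "(\<Sum>(c, k)\<leftarrow>L. of_int c * T powi k) \<noteq> 0"
    using ex_nonzero_laurent_value q0 by metis
  moreover have "(\<Sum>(c, k)\<leftarrow>L. of_int c * T powi k) = (\<Sum>k\<leftarrow>K. tri_term T n D \<beta> k)"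
    unfolding L_def by (induction K) (auto simp: tri_term_def orient_def expo_def \<beta>_def)
  ultimately show ?thesis
    unfolding K_def by (intro exI[of _ T] exI[of _ D] exI[of _ \<beta>]) simp
qed

lemma ex_word_map_elementary:
  fixes w :: "letter list"
  assumes "w \<in> derived (free_grp n) (carrier (free_grp n))"
    and "w \<notin> derived (free_grp n) (derived (free_grp n) (carrier (free_grp n)))"
  obtains Z :: "nat \<Rightarrow> 'a::field_char_0^2^2" and c
    where "\<forall>i. Z i \<in> SL2" and "c \<noteq> 0" and "word_map w Z = mat2 1 c 0 1"
proof -
  have w: "w \<in> carrier (free_grp n)" "signed_count w = 0"
    using assms(1) by (simp_all add: derived_free_grp)
  then have letters: "\<forall>x\<in>set w. fst x < n"
    by (simp add: carrier_free_grp)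
  obtain T :: 'a and D \<beta> where T: "T \<noteq> 0" and c: "(\<Sum>k\<leftarrow>schreier_keys w. tri_term T n D \<beta> k) \<noteq> 0"
    using ex_tri_term_sum_nonzero[OF letters schreier_keys_unbalanced[OF assms]] by blast
  have "\<forall>i. tri_rep T D \<beta> i \<in> SL2"
    using T by (simp add: SL2_def tri_rep_def det_upper_tri)
  moreover have "word_map w (tri_rep T D \<beta>) = mat2 1 (\<Sum>k\<leftarrow>schreier_keys w. tri_term T n D \<beta> k) 0 1"
    using word_map_tri_rep[OF T letters] w(2) by (simp add: weight_def upper_tri_0)
  ultimately show ?thesis
    using that c by blast
qed

section \<open>Conjugating to a unipotent matrix\<close>

lemma matrix_inv_conj:
  fixes A Q Q' :: "'a::field^'n^'n"
  assumes "invertible A" and "Q ** Q' = mat 1" and "Q' ** Q = mat 1"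
  shows "matrix_inv (Q ** A ** Q') = Q ** matrix_inv A ** Q'"
proof (rule matrix_inv_unique)
  have A: "A ** matrix_inv A = mat 1" "matrix_inv A ** A = mat 1"
    using assms(1) unfolding invertible_def matrix_inv_def by (metis (mono_tags, lifting) someI_ex)+
  have "M ** Q' ** Q = M" for M :: "'a^'n^'n"
    using assms(3) by (metis matrix_mul_assoc matrix_mul_rid)
  then have conj_mult: "(Q ** M ** Q') ** (Q ** M' ** Q') = Q ** (M ** M') ** Q'" for M M' :: "'a^'n^'n"
    by (simp add: matrix_mul_assoc)
  show "Q ** A ** Q' ** (Q ** matrix_inv A ** Q') = mat 1"
    by (simp only: conj_mult A matrix_mul_rid assms(2))
  show "Q ** matrix_inv A ** Q' ** (Q ** A ** Q') = mat 1"
    by (simp only: conj_mult A matrix_mul_rid assms(2))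
qed

lemma word_map_conj:
  fixes Q Q' :: "'a::field^2^2"
  assumes "\<forall>i. invertible (Z i)" and "Q ** Q' = mat 1" and "Q' ** Q = mat 1"
  shows "word_map u (\<lambda>i. Q ** Z i ** Q') = Q ** word_map u Z ** Q'"
proof (induction u)
  case Nil
  then show ?case
    using assms(2) by (simp add: word_map_def matrix_mul_rid)
next
  case (Cons x u)
  have "(if snd x then matrix_inv (Q ** Z (fst x) ** Q') else Q ** Z (fst x) ** Q')
      = Q ** (if snd x then matrix_inv (Z (fst x)) else Z (fst x)) ** Q'"
    using assms by (simp add: matrix_inv_conj)
  then have "word_map (x # u) (\<lambda>i. Q ** Z i ** Q')
      = Q ** ((if snd x then matrix_inv (Z (fst x)) else Z (fst x)) ** (Q' ** Q) ** word_map u Z) ** Q'"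
    using Cons by (simp add: word_map_Cons matrix_mul_assoc)
  then show ?case
    using assms(3) by (simp add: word_map_Cons matrix_mul_rid)
qed

lemma word_map_const_mat_1: "word_map u (\<lambda>_. mat 1 :: 'a::field^2^2) = mat 1"
proof -
  have "matrix_inv (mat 1 :: 'a^2^2) = mat 1"
    by (rule matrix_inv_unique) (simp_all add: matrix_mul_lid)
  then show ?thesis
    by (induction u) (simp_all add: word_map_def matrix_mul_lid)
qed

lemma unipotent_SL2_eq:
  fixes X :: "'a::field^2^2"
  assumes "X \<in> SL2" and "unipotent X"
  shows "X = mat2 (1 + (X$1$1 - 1)) (X$1$2) (X$2$1) (1 - (X$1$1 - 1))"
    and "(X$1$1 - 1)^2 + X$1$2 * X$2$1 = 0"
proof -
  define N where "N = X - mat 1"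
  obtain k where "((\<lambda>M. N ** M) ^^ k) (mat 1) = 0"
    using assms(2) unfolding unipotent_def N_def by blast
  moreover have "det (((\<lambda>M. N ** M) ^^ j) (mat 1)) = det N ^ j" for j
    by (induction j) (simp_all add: det_mul)
  moreover have "det (0 :: 'a^2^2) = 0"
    by (simp add: det_2)
  ultimately have "det N ^ k = 0"
    by metis
  then have "(X$1$1 - 1) * (X$2$2 - 1) - X$1$2 * X$2$1 = 0"
    by (simp add: N_def det_2 mat_def)
  moreover have "X$1$1 * X$2$2 - X$1$2 * X$2$1 = 1"
    using assms(1) by (simp add: SL2_def det_2)
  ultimately have "X$2$2 = 2 - X$1$1"
    by (simp add: algebra_simps)
  with \<open>X$1$1 * X$2$2 - _ = 1\<close> show "(X$1$1 - 1)^2 + X$1$2 * X$2$1 = 0"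
    by (simp add: power2_eq_square algebra_simps)
  from \<open>X$2$2 = 2 - X$1$1\<close> show "X = mat2 (1 + (X$1$1 - 1)) (X$1$2) (X$2$1) (1 - (X$1$1 - 1))"
    by (simp add: eq_mat2_iff)
qed

text \<open>With \<open>X - 1 = [[p, b], [r, -p]]\<close>, the first column of \<open>Q\<close> is the fixed vector \<open>(b, -p)\<close> of \<open>X\<close>,
  or \<open>(0, r)\<close> if \<open>b = 0\<close>.\<close>

lemma unipotent_conj_elementary:
  fixes X :: "'a::field^2^2" and c :: 'a
  assumes "X \<in> SL2" and "unipotent X" and "X \<noteq> mat 1" and "c \<noteq> 0"
  obtains Q Q' where "Q ** Q' = mat 1" "Q' ** Q = mat 1" "Q ** mat2 1 c 0 1 ** Q' = X"
proof -
  define p b r where "p = X$1$1 - 1" and "b = X$1$2" and "r = X$2$1"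
  have X: "X = mat2 (1 + p) b r (1 - p)" and pbr: "p^2 + b * r = 0"
    using unipotent_SL2_eq[OF assms(1,2)] by (simp_all add: p_def b_def r_def)
  show ?thesis
  proof (cases "b = 0")
    case False
    have "r = - (p * p) / b"
      using pbr False by (simp add: field_simps power2_eq_square eq_neg_iff_add_eq_0)
    with False assms(4) show ?thesis
      by (intro that[of "mat2 (b/c) 0 (-p/c) 1" "mat2 (c/b) 0 (p/b) 1"])
        (simp_all add: X mat_1_eq_mat2 eq_mat2_iff field_simps)
  next
    case True
    with pbr have "p = 0"
      by simp
    with True X assms(3) have "r \<noteq> 0"
      by (auto simp: mat_1_eq_mat2)
    with True \<open>p = 0\<close> assms(4) show ?thesis
      by (intro that[of "mat2 0 1 (r/c) 0" "mat2 0 (c/r) 1 0"])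
        (simp_all add: X mat_1_eq_mat2 eq_mat2_iff)
  qed
qed

lemma SL2_conj:
  fixes Q Q' A :: "'a::field^2^2"
  assumes "A \<in> SL2" and "Q ** Q' = mat 1"
  shows "Q ** A ** Q' \<in> SL2"
proof -
  have "det Q * det Q' = 1"
    using assms(2) det_mul[of Q Q'] by simp
  with assms(1) show ?thesis
    by (simp add: SL2_def det_mul algebra_simps)
qed

theorem corollary5p3:
  fixes n :: nat and w :: "letter list" and X :: "'a::field_char_0 ^ 2 ^ 2"
  assumes "n \<ge> 2"
    and "w \<in> derived (free_grp n) (carrier (free_grp n))"
    and "w \<notin> derived (free_grp n) (derived (free_grp n) (carrier (free_grp n)))"
    and "X \<in> SL2" and "unipotent X"
  shows "\<exists>Z. (\<forall>i<n. Z i \<in> SL2) \<and> word_map w Z = X"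
proof (cases "X = mat 1")
  case True
  then show ?thesis
    by (intro exI[of _ "\<lambda>_. mat 1"]) (simp add: SL2_def word_map_const_mat_1)
next
  case False
  obtain Z :: "nat \<Rightarrow> 'a^2^2" and c where Z: "\<forall>i. Z i \<in> SL2" and "c \<noteq> 0" and W: "word_map w Z = mat2 1 c 0 1"
    using ex_word_map_elementary[OF assms(2,3)] by blast
  obtain Q Q' where Q: "Q ** Q' = mat 1" "Q' ** Q = mat 1" and X: "Q ** mat2 1 c 0 1 ** Q' = X"
    using unipotent_conj_elementary[OF assms(4,5) False \<open>c \<noteq> 0\<close>] by blast
  have "\<forall>i. invertible (Z i)"
    using Z by (simp add: SL2_def invertible_det_nz)
  then have "word_map w (\<lambda>i. Q ** Z i ** Q') = X"
    using word_map_conj[OF _ Q] W X by simp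
  moreover have "\<forall>i. Q ** Z i ** Q' \<in> SL2"
    using Z SL2_conj[OF _ Q(1)] by blast
  ultimately show ?thesis
    by (intro exI[of _ "\<lambda>i. Q ** Z i ** Q'"]) simp
qed

end
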